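(* Let $G$ be a finite abstract simplicial complex with connection matrix $L$ and $g=L^{-1}$. Then for every $x\in G$, $g(x,x)=\chi(W^+(x))=1-\chi(S(x))$.
   Context: A finite abstract simplicial complex $G$ is a finite set of non-empty finite sets closed under taking non-empty subsets; $\omega(y)=(-1)^{|y|-1}$. The connection matrix $L$ has $L(x,y)=1$ if $x\cap y\neq\emptyset$ and $0$ otherwise. The star is $W^+(x)=\{y\in G: x\subseteq y\}$ and $\chi(W^+(x))=\sum_{y\in W^+(x)}\omega(y)$. The graph $G_1$ has vertex set $G$ with $x\neq y$ adjacent iff one contains the other; $S(x)=\{y\in G: y\subsetneq x \text{ or } x\subsetneq y\}$ and $\chi(S(x))$ is the Euler characteristic of the clique complex of the subgraph of $G_1$ induced on $S(x)$. *)

theory Defs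
  imports Complex_Main
begin

definition simplicial_complex :: "'a set set \<Rightarrow> bool" where
  "simplicial_complex G \<longleftrightarrow> finite G \<and> (\<forall>x\<in>G. finite x \<and> x \<noteq> {}) \<and>
     (\<forall>x\<in>G. \<forall>y. y \<subseteq> x \<and> y \<noteq> {} \<longrightarrow> y \<in> G)"

definition omega :: "'b set \<Rightarrow> int" where
  "omega y = (-1) ^ (card y - 1)"

definition chi :: "'b set set \<Rightarrow> int" where
  "chi A = (\<Sum>y\<in>A. omega y)"

definition conn_matrix :: "'a set \<Rightarrow> 'a set \<Rightarrow> real" where
  "conn_matrix x y = (if x \<inter> y \<noteq> {} then 1 else 0)"

definition inverse_on :: "'i set \<Rightarrow> ('i \<Rightarrow> 'i \<Rightarrow> real) \<Rightarrow> ('i \<Rightarrow> 'i \<Rightarrow> real) \<Rightarrow> bool" where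
  "inverse_on G L g \<longleftrightarrow>
     (\<forall>x\<in>G. \<forall>z\<in>G. (\<Sum>y\<in>G. L x y * g y z) = (if x = z then 1 else 0)) \<and>
     (\<forall>x\<in>G. \<forall>z\<in>G. (\<Sum>y\<in>G. g x y * L y z) = (if x = z then 1 else 0))"

definition star :: "'a set set \<Rightarrow> 'a set \<Rightarrow> 'a set set" where
  "star G x = {y\<in>G. x \<subseteq> y}"

definition G1_adj :: "'a set \<Rightarrow> 'a set \<Rightarrow> bool" where
  "G1_adj x y \<longleftrightarrow> x \<noteq> y \<and> (x \<subseteq> y \<or> y \<subseteq> x)"

definition sphere :: "'a set set \<Rightarrow> 'a set \<Rightarrow> 'a set set" where
  "sphere G x = {y\<in>G. y \<subset> x \<or> x \<subset> y}"

definition clique_complex :: "'v set \<Rightarrow> ('v \<Rightarrow> 'v \<Rightarrow> bool) \<Rightarrow> 'v set set" where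
  "clique_complex V adj = {C. C \<subseteq> V \<and> C \<noteq> {} \<and> finite C \<and> (\<forall>a\<in>C. \<forall>b\<in>C. a \<noteq> b \<longrightarrow> adj a b)}"

end

(*
  The inverse of the connection matrix is explicit: g(x,z) = omega(x) omega(z) chi(W^+(x) \<inter> W^+(z)).
  After exchanging the order of summation, L g = 1 reduces to two alternating sums over the Boolean
  lattice: the non-empty subsets y of a face w that meet x have omega-sum 1 if w \<subseteq> x and 0
  otherwise, and the sets between z and x have omega-sum omega(z) if z = x and 0 otherwise.
  Inverses are unique, so every inverse has diagonal g(x,x) = chi(W^+(x)).

  For the sphere, 1 - chi of the clique complex of a comparability graph is the signed count of all
  chains of the poset, the empty chain included. S(x) is the ordinal sum of the proper faces of x
  and the faces strictly containing x, so the count factors; splitting off the least element of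
  each chain evaluates the factors as omega(x) and omega(x) chi(W^+(x)), and omega(x)^2 = 1.
*)

theory Submission
  imports Defs
begin

lemma sum_minus_one_power_interval:
  assumes "finite y"
  shows "(\<Sum>m | m \<subseteq> y \<and> z \<subseteq> m. (-1::int) ^ card m) = (if z = y then (-1) ^ card z else 0)"
proof -
  consider "z = y" | "z \<subset> y" | "\<not> z \<subseteq> y" by blast
  then show ?thesis
  proof cases
    case 1
    then have "{m. m \<subseteq> y \<and> z \<subseteq> m} = {z}" by auto
    then show ?thesis using 1 by simp
  next
    case 2
    moreover have "finite {m. m \<subseteq> y \<and> z \<subseteq> m}"
      using assms by (rule finite_subset[rotated, OF finite_Pow_iff[THEN iffD2]]) auto
    ultimately show ?thesis
      using assms by (simp add: sum_alternating_cancels card_subsupersets_even_odd)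
  next
    case 3
    then show ?thesis by (auto intro!: sum.neutral)
  qed
qed

lemma sum_minus_one_power_Pow:
  "finite y \<Longrightarrow> (\<Sum>m\<in>Pow y. (-1::int) ^ card m) = (if y = {} then 1 else 0)"
  using sum_minus_one_power_interval[of y "{}"] by (simp add: Pow_def)

lemma sum_minus_one_power_strict_interval:
  assumes "finite y"
  shows "(\<Sum>m | m \<subseteq> y \<and> z \<subset> m. (-1::int) ^ card m) = (if z \<subset> y then - ((-1) ^ card z) else 0)"
proof (cases "z \<subseteq> y")
  case True
  have "{m. m \<subseteq> y \<and> z \<subset> m} = {m. m \<subseteq> y \<and> z \<subseteq> m} - {z}" by auto
  moreover have "finite {m. m \<subseteq> y \<and> z \<subseteq> m}"
    using assms by (rule finite_subset[rotated, OF finite_Pow_iff[THEN iffD2]]) auto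
  ultimately show ?thesis
    using True sum_minus_one_power_interval[OF assms] by (auto simp: sum_diff1)
next
  case False
  then show ?thesis by (auto intro!: sum.neutral)
qed

(* The hypothesis y \<noteq> {} matters: card {} - 1 = 0 in nat, so omega {} = 1. *)
lemma omega_eq_neg_power: "finite y \<Longrightarrow> y \<noteq> {} \<Longrightarrow> omega y = - ((-1) ^ card y)"
  unfolding omega_def by (cases "card y") auto

lemma omega_mult_self: "omega x * omega x = 1"
  unfolding omega_def by (simp flip: power_add)

lemma sum_omega_interval:
  assumes "finite y" "z \<noteq> {}"
  shows "(\<Sum>m | m \<subseteq> y \<and> z \<subseteq> m. omega m) = (if z = y then omega z else 0)"
proof -
  have "(\<Sum>m | m \<subseteq> y \<and> z \<subseteq> m. omega m) = (\<Sum>m | m \<subseteq> y \<and> z \<subseteq> m. - ((-1::int) ^ card m))"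
    using assms by (intro sum.cong refl omega_eq_neg_power) (auto intro: finite_subset)
  also have "\<dots> = - (if z = y then (-1) ^ card z else 0)"
    by (simp add: sum_negf sum_minus_one_power_interval[OF assms(1)])
  finally show ?thesis
    using omega_eq_neg_power[of z] assms by auto
qed

lemma sum_omega_meeting_subsets:
  assumes "finite w" "w \<noteq> {}"
  shows "(\<Sum>y | y \<subseteq> w \<and> y \<inter> x \<noteq> {}. omega y) = (if w \<subseteq> x then 1 else 0)"
proof -
  have meeting: "{y. y \<subseteq> w \<and> y \<inter> x \<noteq> {}} = Pow w - Pow (w - x)" by auto
  have "(\<Sum>y | y \<subseteq> w \<and> y \<inter> x \<noteq> {}. omega y) = (\<Sum>y\<in>Pow w - Pow (w - x). - ((-1::int) ^ card y))"
    unfolding meeting using assms(1) by (intro sum.cong refl omega_eq_neg_power) (auto intro: finite_subset)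
  also have "\<dots> = (\<Sum>y\<in>Pow (w - x). (-1) ^ card y) - (\<Sum>y\<in>Pow w. (-1) ^ card y)"
    using assms(1) by (simp add: sum_negf sum_diff Pow_mono)
  finally show ?thesis
    using assms by (simp add: sum_minus_one_power_Pow)
qed

lemma simplicial_complex_finite: "simplicial_complex G \<Longrightarrow> finite G"
  and simplicial_complex_finite_face: "simplicial_complex G \<Longrightarrow> x \<in> G \<Longrightarrow> finite x"
  and simplicial_complex_nonempty_face: "simplicial_complex G \<Longrightarrow> x \<in> G \<Longrightarrow> x \<noteq> {}"
  and simplicial_complex_subface: "simplicial_complex G \<Longrightarrow> x \<in> G \<Longrightarrow> y \<subseteq> x \<Longrightarrow> y \<noteq> {} \<Longrightarrow> y \<in> G"
  unfolding simplicial_complex_def by blast+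

definition green :: "'a set set \<Rightarrow> 'a set \<Rightarrow> 'a set \<Rightarrow> int" where
  "green G x z = omega x * omega z * chi (star G (x \<union> z))"

lemma green_sym: "green G x z = green G z x"
  unfolding green_def by (simp add: Un_commute mult.commute)

lemma green_diag: "green G x x = chi (star G x)"
  unfolding green_def by (simp add: omega_mult_self)

lemma sum_green_meeting_faces:
  assumes G: "simplicial_complex G" and "x \<in> G" "z \<in> G"
  shows "(\<Sum>y | y \<in> G \<and> x \<inter> y \<noteq> {}. green G y z) = (if x = z then 1 else 0)"
proof -
  have finG: "finite G" using G by (rule simplicial_complex_finite)
  have faces_below: "{y \<in> G. y \<subseteq> w \<and> x \<inter> y \<noteq> {}} = {y. y \<subseteq> w \<and> y \<inter> x \<noteq> {}}" if "w \<in> G" for w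
    using simplicial_complex_subface[OF G that] by blast
  have faces_between: "{w \<in> G. z \<subseteq> w \<and> w \<subseteq> x} = {w. w \<subseteq> x \<and> z \<subseteq> w}"
    using simplicial_complex_subface[OF G \<open>x \<in> G\<close>] simplicial_complex_nonempty_face[OF G \<open>z \<in> G\<close>]
    by blast
  have "(\<Sum>y | y \<in> G \<and> x \<inter> y \<noteq> {}. green G y z)
      = (\<Sum>y | y \<in> G \<and> x \<inter> y \<noteq> {}. \<Sum>w | w \<in> G \<and> y \<union> z \<subseteq> w. omega y * omega z * omega w)"
    unfolding green_def chi_def star_def by (simp add: sum_distrib_left)
  also have "\<dots> = (\<Sum>w\<in>G. \<Sum>y | y \<in> {y \<in> G. x \<inter> y \<noteq> {}} \<and> y \<union> z \<subseteq> w. omega y * omega z * omega w)"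
    using finG by (intro sum.swap_restrict) simp_all
  also have "\<dots> = (\<Sum>w\<in>G. if z \<subseteq> w then (\<Sum>y | y \<subseteq> w \<and> y \<inter> x \<noteq> {}. omega y) * omega z * omega w else 0)"
  proof (intro sum.cong refl)
    fix w assume "w \<in> G"
    have "{y \<in> {y \<in> G. x \<inter> y \<noteq> {}}. y \<union> z \<subseteq> w} = (if z \<subseteq> w then {y. y \<subseteq> w \<and> y \<inter> x \<noteq> {}} else {})"
      using faces_below[OF \<open>w \<in> G\<close>] by auto
    then show "(\<Sum>y | y \<in> {y \<in> G. x \<inter> y \<noteq> {}} \<and> y \<union> z \<subseteq> w. omega y * omega z * omega w)
        = (if z \<subseteq> w then (\<Sum>y | y \<subseteq> w \<and> y \<inter> x \<noteq> {}. omega y) * omega z * omega w else 0)"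
      by (simp add: sum_distrib_right)
  qed
  also have "\<dots> = (\<Sum>w\<in>G. if z \<subseteq> w \<and> w \<subseteq> x then omega z * omega w else 0)"
    using simplicial_complex_finite_face[OF G] simplicial_complex_nonempty_face[OF G]
    by (intro sum.cong refl) (simp add: sum_omega_meeting_subsets)
  also have "\<dots> = (\<Sum>w | w \<in> G \<and> z \<subseteq> w \<and> w \<subseteq> x. omega z * omega w)"
    using finG by (simp add: sum.inter_filter)
  also have "\<dots> = omega z * (\<Sum>w | w \<subseteq> x \<and> z \<subseteq> w. omega w)"
    by (simp add: faces_between sum_distrib_left)
  also have "\<dots> = (if x = z then 1 else 0)"
    using sum_omega_interval[OF simplicial_complex_finite_face[OF G \<open>x \<in> G\<close>]
        simplicial_complex_nonempty_face[OF G \<open>z \<in> G\<close>]] omega_mult_self[of z]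
    by auto
  finally show ?thesis .
qed

lemma inverse_on_green:
  assumes G: "simplicial_complex G"
  shows "inverse_on G conn_matrix (\<lambda>x z. real_of_int (green G x z))"
proof -
  have finG: "finite G" using G by (rule simplicial_complex_finite)
  have right: "(\<Sum>y\<in>G. conn_matrix x y * real_of_int (green G y z)) = (if x = z then 1 else 0)"
    if "x \<in> G" "z \<in> G" for x z
  proof -
    have "(\<Sum>y\<in>G. conn_matrix x y * real_of_int (green G y z))
        = real_of_int (\<Sum>y | y \<in> G \<and> x \<inter> y \<noteq> {}. green G y z)"
      using finG by (simp add: conn_matrix_def sum.inter_filter if_distrib if_distribR cong: if_cong)
    then show ?thesis using sum_green_meeting_faces[OF G that] by simp
  qed
  have "(\<Sum>y\<in>G. real_of_int (green G x y) * conn_matrix y z) = (if x = z then 1 else 0)"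
    if "x \<in> G" "z \<in> G" for x z
    using right[OF that(2,1)] by (simp add: green_sym conn_matrix_def Int_commute mult.commute eq_commute)
  with right show ?thesis unfolding inverse_on_def by blast
qed

lemma inverse_on_unique:
  assumes "finite I" "inverse_on I L g" "inverse_on I L h" "x \<in> I" "z \<in> I"
  shows "g x z = h x z"
proof -
  have "g x z = (\<Sum>y\<in>I. g x y * (if y = z then 1 else 0))"
    using assms(1,5) by (simp add: if_distrib cong: if_cong)
  also have "\<dots> = (\<Sum>y\<in>I. g x y * (\<Sum>w\<in>I. L y w * h w z))"
    using assms(3,5) unfolding inverse_on_def by (intro sum.cong) auto
  also have "\<dots> = (\<Sum>y\<in>I. \<Sum>w\<in>I. g x y * L y w * h w z)"
    by (simp add: sum_distrib_left mult.assoc)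
  also have "\<dots> = (\<Sum>w\<in>I. (\<Sum>y\<in>I. g x y * L y w) * h w z)"
    by (subst sum.swap) (simp add: sum_distrib_right)
  also have "\<dots> = (\<Sum>w\<in>I. (if x = w then 1 else 0) * h w z)"
    using assms(2,4) unfolding inverse_on_def by (intro sum.cong) auto
  also have "\<dots> = (\<Sum>w\<in>I. if x = w then h w z else 0)"
    by (intro sum.cong) auto
  also have "\<dots> = h x z"
    using assms(1,4) by simp
  finally show ?thesis .
qed

definition chains_in :: "'a::order set \<Rightarrow> 'a set set" where
  "chains_in P = {C. C \<subseteq> P \<and> Complete_Partial_Order.chain (\<le>) C}"

text \<open>\<open>chain_sum P\<close> is \<open>1 - \<chi>\<close> of the order complex of \<open>P\<close>, the empty chain contributing the \<open>1\<close>.\<close>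

definition chain_sum :: "'a::order set \<Rightarrow> int" where
  "chain_sum P = (\<Sum>C\<in>chains_in P. (-1) ^ card C)"

lemma finite_chains_in: "finite P \<Longrightarrow> finite (chains_in P)"
  unfolding chains_in_def by (rule finite_subset[of _ "Pow P"]) auto

lemma chain_insert_least:
  fixes m :: "'a::order"
  assumes "Complete_Partial_Order.chain (\<le>) C" "\<And>y. y \<in> C \<Longrightarrow> m < y"
  shows "Complete_Partial_Order.chain (\<le>) (insert m C)"
  using assms unfolding chain_def by (metis insert_iff less_imp_le order_refl)

lemma chain_union_below:
  fixes C1 C2 :: "'a::order set"
  assumes "Complete_Partial_Order.chain (\<le>) C1" "Complete_Partial_Order.chain (\<le>) C2"
    and "\<And>a b. a \<in> C1 \<Longrightarrow> b \<in> C2 \<Longrightarrow> a < b"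
  shows "Complete_Partial_Order.chain (\<le>) (C1 \<union> C2)"
proof (rule chainI)
  fix x y assume "x \<in> C1 \<union> C2" "y \<in> C1 \<union> C2"
  then show "x \<le> y \<or> y \<le> x"
    using assms(3) chainD[OF assms(1)] chainD[OF assms(2)] by (metis UnE less_imp_le)
qed

lemma chains_in_split_least:
  fixes P :: "'a::order set"
  assumes "finite P"
  shows "chains_in P = insert {} (\<Union>m\<in>P. insert m ` chains_in {y\<in>P. m < y})"
proof (intro equalityI subsetI)
  fix C assume "C \<in> chains_in P"
  then have CP: "C \<subseteq> P" and chain: "Complete_Partial_Order.chain (\<le>) C"
    unfolding chains_in_def by auto
  show "C \<in> insert {} (\<Union>m\<in>P. insert m ` chains_in {y\<in>P. m < y})"
  proof (cases "C = {}")
    case False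
    have "finite C" using CP assms by (rule finite_subset)
    with False obtain m where m: "m \<in> C" "\<And>y. y \<in> C \<Longrightarrow> y \<le> m \<Longrightarrow> m = y"
      using finite_has_minimal by metis
    have least: "m < y" if "y \<in> C" "y \<noteq> m" for y
      using chainD[OF chain m(1) that(1)] m(2)[OF that(1)] that(2) by auto
    have "C - {m} \<in> chains_in {y\<in>P. m < y}"
      unfolding chains_in_def using CP least chain_subset[OF chain] by auto
    moreover have "C = insert m (C - {m})" using m by auto
    ultimately show ?thesis using m CP by blast
  qed simp
next
  fix C assume "C \<in> insert {} (\<Union>m\<in>P. insert m ` chains_in {y\<in>P. m < y})"
  then show "C \<in> chains_in P"
    unfolding chains_in_def by (auto simp: chain_empty intro!: chain_insert_least)
qed

lemma chain_sum_rec: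
  fixes P :: "'a::order set"
  assumes fin: "finite P"
  shows "chain_sum P = 1 - (\<Sum>m\<in>P. chain_sum {y\<in>P. m < y})"
proof -
  let ?above = "\<lambda>m. chains_in {y\<in>P. m < y}"
  have fin_above: "finite (?above m)" for m
    using fin by (simp add: finite_chains_in)
  have not_in_above: "m \<notin> C" "finite C" if "C \<in> ?above m" for m C
    using that fin unfolding chains_in_def by (auto intro: finite_subset)
  have disjoint: "insert i ` ?above i \<inter> insert j ` ?above j = {}" if "i \<noteq> j" for i j
  proof -
    have False if "D \<in> ?above i" "E \<in> ?above j" "insert i D = insert j E" for D E
    proof -
      have "i \<in> E" "j \<in> D" using that(3) \<open>i \<noteq> j\<close> by (metis insert_iff insertI1)+
      with that(1,2) have "j < i" "i < j" unfolding chains_in_def by auto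
      then show False by simp
    qed
    then show ?thesis by blast
  qed
  have sum_above: "(\<Sum>C\<in>insert m ` ?above m. (-1::int) ^ card C) = - chain_sum {y\<in>P. m < y}" for m
  proof -
    have "inj_on (insert m) (?above m)"
      by (rule inj_onI) (metis insert_ident not_in_above(1))
    then have "(\<Sum>C\<in>insert m ` ?above m. (-1::int) ^ card C) = (\<Sum>C\<in>?above m. (-1) ^ card (insert m C))"
      by (simp add: sum.reindex)
    also have "\<dots> = (\<Sum>C\<in>?above m. - ((-1) ^ card C))"
      using not_in_above by (intro sum.cong) auto
    finally show ?thesis
      unfolding chain_sum_def by (simp add: sum_negf)
  qed
  have "chain_sum P = 1 + (\<Sum>C\<in>(\<Union>m\<in>P. insert m ` ?above m). (-1) ^ card C)"
    unfolding chain_sum_def chains_in_split_least[OF fin] using fin fin_above by (subst sum.insert) auto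
  also have "\<dots> = 1 + (\<Sum>m\<in>P. \<Sum>C\<in>insert m ` ?above m. (-1) ^ card C)"
    using fin fin_above disjoint by (subst sum.UNION_disjoint) auto
  finally show ?thesis by (simp add: sum_above sum_negf)
qed

lemma chain_sum_union:
  fixes A B :: "'a::order set"
  assumes fin: "finite A" "finite B" and below: "\<And>a b. a \<in> A \<Longrightarrow> b \<in> B \<Longrightarrow> a < b"
  shows "chain_sum (A \<union> B) = chain_sum A * chain_sum B"
proof -
  have disjoint: "A \<inter> B = {}" using below by fastforce
  have union: "chains_in (A \<union> B) = (\<lambda>(C1, C2). C1 \<union> C2) ` (chains_in A \<times> chains_in B)"
  proof (intro equalityI subsetI)
    fix C assume "C \<in> chains_in (A \<union> B)"
    then have "C = (C \<inter> A) \<union> (C \<inter> B)" "(C \<inter> A, C \<inter> B) \<in> chains_in A \<times> chains_in B"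
      unfolding chains_in_def by (auto intro: chain_subset)
    then show "C \<in> (\<lambda>(C1, C2). C1 \<union> C2) ` (chains_in A \<times> chains_in B)"
      by (metis (no_types, lifting) case_prod_conv image_eqI)
  next
    fix C assume "C \<in> (\<lambda>(C1, C2). C1 \<union> C2) ` (chains_in A \<times> chains_in B)"
    then obtain C1 C2 where "C = C1 \<union> C2" "C1 \<in> chains_in A" "C2 \<in> chains_in B" by auto
    then show "C \<in> chains_in (A \<union> B)"
      unfolding chains_in_def using below by (auto intro!: chain_union_below)
  qed
  have inj: "inj_on (\<lambda>(C1, C2). C1 \<union> C2) (chains_in A \<times> chains_in B)"
  proof (rule inj_onI, clarify)
    fix C1 C2 D1 D2
    assume "C1 \<in> chains_in A" "C2 \<in> chains_in B" "D1 \<in> chains_in A" "D2 \<in> chains_in B"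
      and "C1 \<union> C2 = D1 \<union> D2"
    then have "C1 = (C1 \<union> C2) \<inter> A" "D1 = (D1 \<union> D2) \<inter> A" "C2 = (C1 \<union> C2) \<inter> B" "D2 = (D1 \<union> D2) \<inter> B"
      using disjoint unfolding chains_in_def by auto
    then show "C1 = D1 \<and> C2 = D2" using \<open>C1 \<union> C2 = D1 \<union> D2\<close> by metis
  qed
  have sign_union: "(-1::int) ^ card (fst p \<union> snd p) = (-1) ^ card (fst p) * (-1) ^ card (snd p)"
    if "p \<in> chains_in A \<times> chains_in B" for p
  proof -
    from that have "fst p \<subseteq> A" "snd p \<subseteq> B" unfolding chains_in_def by auto
    then have "finite (fst p)" "finite (snd p)" "fst p \<inter> snd p = {}"
      using fin disjoint by (auto intro: finite_subset)
    then show ?thesis by (simp add: card_Un_disjoint power_add)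
  qed
  have "chain_sum (A \<union> B) = (\<Sum>p\<in>chains_in A \<times> chains_in B. (-1) ^ card (fst p \<union> snd p))"
    unfolding chain_sum_def union by (subst sum.reindex[OF inj]) (simp add: case_prod_beta comp_def)
  also have "\<dots> = (\<Sum>p\<in>chains_in A \<times> chains_in B. (-1) ^ card (fst p) * (-1) ^ card (snd p))"
    using sign_union by (rule sum.cong[OF refl])
  also have "\<dots> = chain_sum A * chain_sum B"
    unfolding chain_sum_def by (simp add: sum_product sum.cartesian_product case_prod_beta)
  finally show ?thesis .
qed

lemma sum_upper_sets_convex:
  fixes F :: "'a set set"
  assumes fin: "finite F" and finite_members: "\<And>y. y \<in> F \<Longrightarrow> finite y"
    and convex: "\<And>u m y. u \<in> F \<Longrightarrow> y \<in> F \<Longrightarrow> u \<subseteq> m \<Longrightarrow> m \<subseteq> y \<Longrightarrow> m \<in> F"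
    and "z \<in> F"
  shows "(\<Sum>m | m \<in> F \<and> z \<subset> m. \<Sum>y | y \<in> F \<and> m \<subseteq> y. (-1::int) ^ card m * (-1) ^ card y)
    = - ((-1) ^ card z * (\<Sum>y | y \<in> F \<and> z \<subset> y. (-1) ^ card y))"
proof -
  define U where "U = {y\<in>F. z \<subset> y}"
  have inner: "(\<Sum>m | m \<in> U \<and> m \<subseteq> y. (-1::int) ^ card m) = (if z \<subset> y then - ((-1) ^ card z) else 0)"
    if "y \<in> F" for y
  proof -
    have "{m. m \<in> U \<and> m \<subseteq> y} = {m. m \<subseteq> y \<and> z \<subset> m}"
      using convex[OF \<open>z \<in> F\<close> that] unfolding U_def by auto
    then show ?thesis using sum_minus_one_power_strict_interval[OF finite_members[OF that]] by simp
  qed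
  have "(\<Sum>m\<in>U. \<Sum>y | y \<in> F \<and> m \<subseteq> y. (-1::int) ^ card m * (-1) ^ card y)
      = (\<Sum>y\<in>F. \<Sum>m | m \<in> U \<and> m \<subseteq> y. (-1) ^ card m * (-1) ^ card y)"
    unfolding U_def using fin by (subst sum.swap_restrict) auto
  also have "\<dots> = (\<Sum>y\<in>F. (if z \<subset> y then - ((-1) ^ card z) else 0) * (-1) ^ card y)"
    using inner by (simp add: sum_distrib_right[symmetric] cong: sum.cong)
  also have "\<dots> = (\<Sum>y\<in>U. - ((-1) ^ card z * (-1) ^ card y))"
    unfolding U_def sum.inter_filter[OF fin] by (intro sum.cong) auto
  finally show ?thesis unfolding U_def by (simp add: sum_negf sum_distrib_left)
qed

lemma chain_sum_above_convex:
  fixes F :: "'a set set"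
  assumes fin: "finite F" and finite_members: "\<And>y. y \<in> F \<Longrightarrow> finite y"
    and convex: "\<And>u m y. u \<in> F \<Longrightarrow> y \<in> F \<Longrightarrow> u \<subseteq> m \<Longrightarrow> m \<subseteq> y \<Longrightarrow> m \<in> F"
    and "z \<in> F"
  shows "chain_sum {y\<in>F. z \<subset> y} = (-1) ^ card z * (\<Sum>y | y \<in> F \<and> z \<subseteq> y. (-1) ^ card y)"
  using \<open>z \<in> F\<close>
proof (induction "card {y\<in>F. z \<subset> y}" arbitrary: z rule: less_induct)
  case (less z)
  define U where "U = {y\<in>F. z \<subset> y}"
  have finU: "finite U" unfolding U_def using fin by simp
  have IH: "chain_sum {y\<in>U. m < y} = (-1) ^ card m * (\<Sum>y | y \<in> F \<and> m \<subseteq> y. (-1) ^ card y)"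
    if "m \<in> U" for m
  proof -
    have "{y\<in>U. m < y} = {y\<in>F. m \<subset> y}" using that unfolding U_def by auto
    moreover have "card {y\<in>F. m \<subset> y} < card U"
      using finU that unfolding U_def by (intro psubset_card_mono) auto
    ultimately show ?thesis using less.hyps[of m] that unfolding U_def by simp
  qed
  have "chain_sum U = 1 - (\<Sum>m\<in>U. \<Sum>y | y \<in> F \<and> m \<subseteq> y. (-1) ^ card m * (-1) ^ card y)"
    using chain_sum_rec[OF finU] IH by (simp add: sum_distrib_left)
  also have "\<dots> = 1 + (-1) ^ card z * (\<Sum>y\<in>U. (-1) ^ card y)"
    using sum_upper_sets_convex[OF fin finite_members convex less.prems] unfolding U_def by simp
  also have "\<dots> = (-1) ^ card z * (\<Sum>y | y \<in> F \<and> z \<subseteq> y. (-1) ^ card y)"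
  proof -
    have up_set: "{y. y \<in> F \<and> z \<subseteq> y} = insert z U" using less.prems unfolding U_def by auto
    have "z \<notin> U" unfolding U_def by simp
    then show ?thesis unfolding up_set using finU by (simp add: distrib_left flip: power_add)
  qed
  finally show ?case unfolding U_def .
qed

lemma chain_sum_above_face:
  assumes G: "simplicial_complex G" and "x \<in> G"
  shows "chain_sum {y\<in>G. x \<subset> y} = omega x * chi (star G x)"
proof -
  have "chain_sum {y\<in>G. x \<subset> y} = (-1) ^ card x * (\<Sum>y | y \<in> G \<and> x \<subseteq> y. (-1) ^ card y)"
  proof (rule chain_sum_above_convex)
    fix u m y assume "u \<in> G" "y \<in> G" "u \<subseteq> m" "m \<subseteq> y"
    then show "m \<in> G"
      using simplicial_complex_subface[OF G] simplicial_complex_nonempty_face[OF G] by blast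
  qed (use G \<open>x \<in> G\<close> simplicial_complex_finite simplicial_complex_finite_face in auto)
  also have "\<dots> = omega x * chi (star G x)"
  proof -
    have "chi (star G x) = (\<Sum>y | y \<in> G \<and> x \<subseteq> y. - ((-1) ^ card y))"
      unfolding chi_def star_def using G
      by (intro sum.cong refl omega_eq_neg_power) (auto simp: simplicial_complex_finite_face simplicial_complex_nonempty_face)
    then show ?thesis
      using omega_eq_neg_power[OF simplicial_complex_finite_face[OF G \<open>x \<in> G\<close>] simplicial_complex_nonempty_face[OF G \<open>x \<in> G\<close>]]
      by (simp add: sum_negf)
  qed
  finally show ?thesis .
qed

lemma chain_sum_proper_faces:
  fixes x :: "'a set"
  assumes "finite x" "x \<noteq> {}"
  shows "chain_sum {y. y \<noteq> {} \<and> y \<subset> x} = omega x"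
proof -
  have "chain_sum {y\<in>Pow x - {x}. {} \<subset> y} = (-1) ^ card ({} :: 'a set) * (\<Sum>y | y \<in> Pow x - {x} \<and> {} \<subseteq> y. (-1) ^ card y)"
    by (rule chain_sum_above_convex) (use assms in \<open>auto intro: finite_subset\<close>)
  moreover have "{y\<in>Pow x - {x}. {} \<subset> y} = {y. y \<noteq> {} \<and> y \<subset> x}" by auto
  moreover have "(\<Sum>y | y \<in> Pow x - {x} \<and> {} \<subseteq> y. (-1::int) ^ card y) = - ((-1) ^ card x)"
  proof -
    have "{y. y \<in> Pow x - {x} \<and> {} \<subseteq> y} = Pow x - {x}" by auto
    then show ?thesis using assms by (simp add: sum_diff1 sum_minus_one_power_Pow)
  qed
  ultimately show ?thesis using assms by (simp add: omega_eq_neg_power)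
qed

lemma chi_clique_complex_comparability:
  fixes S :: "'a set set"
  assumes "finite S"
  shows "chi (clique_complex S G1_adj) = 1 - chain_sum S"
proof -
  have "clique_complex S G1_adj = chains_in S - {{}}"
    unfolding clique_complex_def G1_adj_def chains_in_def chain_def
    using assms by (auto intro: finite_subset)
  then have "chi (clique_complex S G1_adj) = (\<Sum>C\<in>chains_in S - {{}}. - ((-1) ^ card C))"
    unfolding chi_def using assms
    by (intro sum.cong refl omega_eq_neg_power) (auto simp: chains_in_def intro: finite_subset)
  also have "\<dots> = 1 - chain_sum S"
    using finite_chains_in[OF assms] unfolding chain_sum_def
    by (simp add: sum_negf sum_diff1 chains_in_def chain_empty)
  finally show ?thesis .
qed

lemma sphere_eq_proper_faces_Un_above:
  assumes G: "simplicial_complex G" and "x \<in> G"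
  shows "sphere G x = {y. y \<noteq> {} \<and> y \<subset> x} \<union> {y\<in>G. x \<subset> y}"
proof -
  have "y \<in> G" if "y \<noteq> {}" "y \<subset> x" for y
    using simplicial_complex_subface[OF G \<open>x \<in> G\<close>] that by blast
  then show ?thesis
    unfolding sphere_def using simplicial_complex_nonempty_face[OF G] by auto
qed

lemma chi_star_eq_one_minus_chi_sphere:
  assumes G: "simplicial_complex G" and "x \<in> G"
  shows "chi (star G x) = 1 - chi (clique_complex (sphere G x) G1_adj)"
proof -
  have finx: "finite x" "x \<noteq> {}"
    using simplicial_complex_finite_face[OF G] simplicial_complex_nonempty_face[OF G] \<open>x \<in> G\<close> by auto
  have finG: "finite G" using G by (rule simplicial_complex_finite)
  have "chain_sum (sphere G x) = chain_sum {y. y \<noteq> {} \<and> y \<subset> x} * chain_sum {y\<in>G. x \<subset> y}"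
    unfolding sphere_eq_proper_faces_Un_above[OF G \<open>x \<in> G\<close>]
  proof (rule chain_sum_union)
    show "finite {y. y \<noteq> {} \<and> y \<subset> x}" by (rule finite_subset[of _ "Pow x"]) (use finx in auto)
  qed (use finG in auto)
  also have "\<dots> = chi (star G x)"
    using chain_sum_proper_faces[OF finx] chain_sum_above_face[OF G \<open>x \<in> G\<close>] omega_mult_self[of x]
    by (simp add: mult.assoc[symmetric])
  finally have "chain_sum (sphere G x) = chi (star G x)" .
  moreover have "finite (sphere G x)" unfolding sphere_def using finG by simp
  ultimately show ?thesis using chi_clique_complex_comparability by fastforce
qed

theorem mainTheorem10:
  fixes G :: "'a set set"
  assumes "simplicial_complex G"
  shows "(\<exists>g. inverse_on G conn_matrix g) \<and>
         (\<forall>g. inverse_on G conn_matrix g \<longrightarrow>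
            (\<forall>x\<in>G. g x x = real_of_int (chi (star G x)) \<and>
                    real_of_int (chi (star G x)) = 1 - real_of_int (chi (clique_complex (sphere G x) G1_adj))))"
proof (intro conjI allI impI ballI)
  show "\<exists>g. inverse_on G conn_matrix g" using inverse_on_green[OF assms] by blast
next
  fix g x assume g: "inverse_on G conn_matrix g" and "x \<in> G"
  have "g x x = real_of_int (green G x x)"
    using inverse_on_unique[OF simplicial_complex_finite[OF assms] g inverse_on_green[OF assms]] \<open>x \<in> G\<close>
    by blast
  then show "g x x = real_of_int (chi (star G x))" by (simp add: green_diag)
next
  fix x assume "x \<in> G"
  then show "real_of_int (chi (star G x)) = 1 - real_of_int (chi (clique_complex (sphere G x) G1_adj))"
    using chi_star_eq_one_minus_chi_sphere[OF assms] by simp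
qed

end
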